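(* Let $F$ be a commutative ring and $R$ an $F$-algebra with a descending filtration of ideals $R=I_0\supseteq I_1\supseteq I_2\supseteq\cdots$ such that $R/I_s$ is an artinian $F$-algebra for every $s$. Let $\overline{R}=\varprojlim R/I_j$ be the completion, with the inverse limit topology in which each $R/I_j$ is discrete. Then every finitely generated left ideal and every finitely generated right ideal of $\overline{R}$ is closed.
   Context: A descending filtration of $R$ is a sequence of ideals $R=I_0\supseteq I_1\supseteq\cdots$ with $\bigcap_t I_t=0$ and $I_sI_t\subseteq I_{s+t}$ for all $s,t$. $\overline{R}$ is a Hausdorff topological ring. *)

theory Defs
  imports "HOL-Analysis.Analysis" "HOL-Algebra.Algebra"
begin

definition F_algebra :: "('f, 'g) ring_scheme \<Rightarrow> ('f, 'a, 'b) module_scheme \<Rightarrow> bool" where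
  "F_algebra F R \<longleftrightarrow> module F R \<and> ring R \<and>
     (\<forall>a \<in> carrier F. \<forall>x \<in> carrier R. \<forall>y \<in> carrier R.
        (a \<odot>\<^bsub>R\<^esub> x) \<otimes>\<^bsub>R\<^esub> y = a \<odot>\<^bsub>R\<^esub> (x \<otimes>\<^bsub>R\<^esub> y) \<and>
        x \<otimes>\<^bsub>R\<^esub> (a \<odot>\<^bsub>R\<^esub> y) = a \<odot>\<^bsub>R\<^esub> (x \<otimes>\<^bsub>R\<^esub> y))"

definition left_ideal :: "('a, 'b) ring_scheme \<Rightarrow> 'a set \<Rightarrow> bool" where
  "left_ideal S L \<longleftrightarrow> additive_subgroup L S \<and>
     (\<forall>a \<in> carrier S. \<forall>x \<in> L. a \<otimes>\<^bsub>S\<^esub> x \<in> L)"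

definition right_ideal :: "('a, 'b) ring_scheme \<Rightarrow> 'a set \<Rightarrow> bool" where
  "right_ideal S L \<longleftrightarrow> additive_subgroup L S \<and>
     (\<forall>a \<in> carrier S. \<forall>x \<in> L. x \<otimes>\<^bsub>S\<^esub> a \<in> L)"

definition left_genideal :: "('a, 'b) ring_scheme \<Rightarrow> 'a set \<Rightarrow> 'a set" where
  "left_genideal S A = Inter {L. left_ideal S L \<and> A \<subseteq> L}"

definition right_genideal :: "('a, 'b) ring_scheme \<Rightarrow> 'a set \<Rightarrow> 'a set" where
  "right_genideal S A = Inter {L. right_ideal S L \<and> A \<subseteq> L}"

definition left_artinian :: "('a, 'b) ring_scheme \<Rightarrow> bool" where
  "left_artinian S \<longleftrightarrow> (\<forall>f :: nat \<Rightarrow> 'a set.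
     (\<forall>n. left_ideal S (f n)) \<and> (\<forall>n. f (Suc n) \<subseteq> f n) \<longrightarrow> (\<exists>N. \<forall>n\<ge>N. f n = f N))"

definition right_artinian :: "('a, 'b) ring_scheme \<Rightarrow> bool" where
  "right_artinian S \<longleftrightarrow> (\<forall>f :: nat \<Rightarrow> 'a set.
     (\<forall>n. right_ideal S (f n)) \<and> (\<forall>n. f (Suc n) \<subseteq> f n) \<longrightarrow> (\<exists>N. \<forall>n\<ge>N. f n = f N))"

definition artinian_ring :: "('a, 'b) ring_scheme \<Rightarrow> bool" where
  "artinian_ring S \<longleftrightarrow> ring S \<and> left_artinian S \<and> right_artinian S"

definition descending_filtration :: "('a, 'b) ring_scheme \<Rightarrow> (nat \<Rightarrow> 'a set) \<Rightarrow> bool" where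
  "descending_filtration R I \<longleftrightarrow>
     I 0 = carrier R \<and> (\<forall>t. ideal (I t) R) \<and> (\<forall>t. I (Suc t) \<subseteq> I t) \<and>
     Inter (range I) = {\<zero>\<^bsub>R\<^esub>} \<and>
     (\<forall>s t. \<forall>a \<in> I s. \<forall>b \<in> I t. a \<otimes>\<^bsub>R\<^esub> b \<in> I (s + t))"

(* The inverse limit lim_j R/I_j: compatible sequences of cosets x j \<in> R/I_j.
   The transition map R/I_j \<rightarrow> R/I_i (i \<le> j) sends a coset of I_j to the unique
   coset of I_i containing it, so compatibility means x j \<subseteq> x i. *)
definition completion_carrier :: "('a, 'b) ring_scheme \<Rightarrow> (nat \<Rightarrow> 'a set) \<Rightarrow> (nat \<Rightarrow> 'a set) set" where
  "completion_carrier R I =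
     {x. (\<forall>j. x j \<in> carrier (R Quot I j)) \<and> (\<forall>i j. i \<le> j \<longrightarrow> x j \<subseteq> x i)}"

definition completion :: "('a, 'b) ring_scheme \<Rightarrow> (nat \<Rightarrow> 'a set) \<Rightarrow> (nat \<Rightarrow> 'a set) ring" where
  "completion R I =
    \<lparr>carrier = completion_carrier R I,
     mult = (\<lambda>x y j. x j \<otimes>\<^bsub>R Quot I j\<^esub> y j),
     one = (\<lambda>j. \<one>\<^bsub>R Quot I j\<^esub>),
     ring.zero = (\<lambda>j. \<zero>\<^bsub>R Quot I j\<^esub>),
     ring.add = (\<lambda>x y j. x j \<oplus>\<^bsub>R Quot I j\<^esub> y j)\<rparr>"

definition completion_topology :: "('a, 'b) ring_scheme \<Rightarrow> (nat \<Rightarrow> 'a set) \<Rightarrow> (nat \<Rightarrow> 'a set) topology" where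
  "completion_topology R I =
     subtopology (product_topology (\<lambda>j. discrete_topology (carrier (R Quot I j))) UNIV)
                 (completion_carrier R I)"

end

theory Submission
  imports Defs
begin

(* Let L = Rbar a_1 + ... + Rbar a_n and let L_j be the preimage in R of the left ideal of R/I_j
   generated by the j-th components of the a_i. The set of y with y_j in L_j for every j is cut out
   by conditions on single coordinates, hence closed, and it contains L; the point is that it is
   contained in L. Peeling off one generator a at a time, the coefficients r in R with
   y_j - r a_j in the span of the remaining generators form a coset of a left ideal containing I_j,
   and these cosets shrink as j grows. Since R/I_j is left artinian, the images of the cosets of
   levels m >= j in R/I_j stabilise (a Mittag-Leffler argument), so the coefficients can be chosen
   compatibly at all levels, that is, as one element r of Rbar. Right ideals are the left ideals of
   the opposite ring, whose completion is the opposite of the completion. *)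

section \<open>Finite left spans\<close>

context ring
begin

lemma left_idealI:
  assumes "L \<subseteq> carrier R" "\<zero> \<in> L" "\<And>x y. x \<in> L \<Longrightarrow> y \<in> L \<Longrightarrow> x \<oplus> y \<in> L"
    and "\<And>x. x \<in> L \<Longrightarrow> \<ominus> x \<in> L" "\<And>c x. c \<in> carrier R \<Longrightarrow> x \<in> L \<Longrightarrow> c \<otimes> x \<in> L"
  shows "left_ideal R L"
proof -
  have "subgroup L (add_monoid R)"
    by (rule add.subgroupI) (use assms in \<open>auto simp: a_inv_def\<close>)
  then show ?thesis
    unfolding left_ideal_def using assms(5) by (auto intro: additive_subgroupI)
qed

lemma left_ideal_subset: "left_ideal R L \<Longrightarrow> L \<subseteq> carrier R"
  unfolding left_ideal_def by (simp add: additive_subgroup.a_subset)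

lemma left_ideal_zero: "left_ideal R L \<Longrightarrow> \<zero> \<in> L"
  unfolding left_ideal_def by (simp add: additive_subgroup.zero_closed)

lemma left_ideal_add: "left_ideal R L \<Longrightarrow> x \<in> L \<Longrightarrow> y \<in> L \<Longrightarrow> x \<oplus> y \<in> L"
  unfolding left_ideal_def by (simp add: additive_subgroup.a_closed)

lemma left_ideal_a_inv: "left_ideal R L \<Longrightarrow> x \<in> L \<Longrightarrow> \<ominus> x \<in> L"
  unfolding left_ideal_def by (simp add: additive_subgroup.a_inv_closed)

lemma left_ideal_minus: "left_ideal R L \<Longrightarrow> x \<in> L \<Longrightarrow> y \<in> L \<Longrightarrow> x \<ominus> y \<in> L"
  by (simp add: a_minus_def left_ideal_add left_ideal_a_inv)

lemma left_ideal_mult: "left_ideal R L \<Longrightarrow> c \<in> carrier R \<Longrightarrow> x \<in> L \<Longrightarrow> c \<otimes> x \<in> L"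
  unfolding left_ideal_def by blast

lemma left_ideal_minus_cancel:
  assumes "left_ideal R L" "x \<in> carrier R" "x \<ominus> y \<in> L" "y \<in> L"
  shows "x \<in> L"
proof -
  have "y \<in> carrier R" using assms(1,4) left_ideal_subset by blast
  then have "x = (x \<ominus> y) \<oplus> y" using assms(2) by algebra
  then show ?thesis using assms left_ideal_add by metis
qed

lemma left_ideal_of_ideal: "ideal J R \<Longrightarrow> left_ideal R J"
  unfolding left_ideal_def by (simp add: ideal.axioms(1) ideal.I_l_closed)

lemma left_ideal_set_add:
  assumes "left_ideal R L" "left_ideal R M"
  shows "left_ideal R (L <+>\<^bsub>R\<^esub> M)"
  unfolding left_ideal_def
proof (intro conjI ballI)
  show "additive_subgroup (L <+>\<^bsub>R\<^esub> M) R"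
    using assms unfolding left_ideal_def by (simp add: add_additive_subgroups)
next
  fix c x assume c: "c \<in> carrier R" and "x \<in> L <+>\<^bsub>R\<^esub> M"
  then obtain y z where yz: "y \<in> L" "z \<in> M" "x = y \<oplus> z" by (auto simp: set_add_def')
  have "c \<otimes> x = c \<otimes> y \<oplus> c \<otimes> z"
    unfolding yz(3) using c yz(1,2) left_ideal_subset[OF assms(1)] left_ideal_subset[OF assms(2)] r_distr
    by blast
  moreover have "c \<otimes> y \<in> L" "c \<otimes> z \<in> M"
    using c yz left_ideal_mult[OF assms(1)] left_ideal_mult[OF assms(2)] by auto
  ultimately show "c \<otimes> x \<in> L <+>\<^bsub>R\<^esub> M" unfolding set_add_def' by blast
qed

lemma left_ideal_set_add_upper:
  assumes "left_ideal R L" "left_ideal R M"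
  shows "L \<subseteq> L <+>\<^bsub>R\<^esub> M" "M \<subseteq> L <+>\<^bsub>R\<^esub> M"
proof -
  show "L \<subseteq> L <+>\<^bsub>R\<^esub> M"
  proof
    fix x assume x: "x \<in> L"
    then have "x = x \<oplus> \<zero>" using left_ideal_subset[OF assms(1)] by auto
    then show "x \<in> L <+>\<^bsub>R\<^esub> M" using x left_ideal_zero[OF assms(2)] unfolding set_add_def' by blast
  qed
  show "M \<subseteq> L <+>\<^bsub>R\<^esub> M"
  proof
    fix x assume x: "x \<in> M"
    then have "x = \<zero> \<oplus> x" using left_ideal_subset[OF assms(2)] by auto
    then show "x \<in> L <+>\<^bsub>R\<^esub> M" using x left_ideal_zero[OF assms(1)] unfolding set_add_def' by blast
  qed
qed

lemma ideal_subset_mult_preimage: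
  assumes "ideal J R" "J \<subseteq> L" "b \<in> carrier R"
  shows "J \<subseteq> {r \<in> carrier R. r \<otimes> b \<in> L}"
proof
  fix r assume r: "r \<in> J"
  then have "r \<otimes> b \<in> J" using ideal.I_r_closed[OF assms(1)] assms(3) by blast
  then show "r \<in> {r \<in> carrier R. r \<otimes> b \<in> L}" using r assms(2) ideal.Icarr[OF assms(1)] by blast
qed

lemma mult_preimage_antimono:
  assumes "left_ideal R L" "L' \<subseteq> L" "b \<in> carrier R" "b' \<in> carrier R" "b' \<ominus> b \<in> L"
  shows "{r \<in> carrier R. r \<otimes> b' \<in> L'} \<subseteq> {r \<in> carrier R. r \<otimes> b \<in> L}"
proof
  fix r assume "r \<in> {r \<in> carrier R. r \<otimes> b' \<in> L'}"
  then have r: "r \<in> carrier R" "r \<otimes> b' \<in> L" using assms(2) by auto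
  have "r \<otimes> b = r \<otimes> b' \<ominus> r \<otimes> (b' \<ominus> b)" using r(1) assms(3,4) by algebra
  moreover have "r \<otimes> (b' \<ominus> b) \<in> L" using left_ideal_mult[OF assms(1) r(1) assms(5)] .
  ultimately show "r \<in> {r \<in> carrier R. r \<otimes> b \<in> L}" using r left_ideal_minus[OF assms(1)] by simp
qed

lemma left_ideal_mult_preimage:
  assumes "left_ideal R L" "b \<in> carrier R"
  shows "left_ideal R {r \<in> carrier R. r \<otimes> b \<in> L}"
proof (rule left_idealI)
  show "\<zero> \<in> {r \<in> carrier R. r \<otimes> b \<in> L}"
    using assms left_ideal_zero by simp
  fix x y assume "x \<in> {r \<in> carrier R. r \<otimes> b \<in> L}" "y \<in> {r \<in> carrier R. r \<otimes> b \<in> L}"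
  then show "x \<oplus> y \<in> {r \<in> carrier R. r \<otimes> b \<in> L}"
    using assms left_ideal_add by (simp add: l_distr)
next
  fix x assume "x \<in> {r \<in> carrier R. r \<otimes> b \<in> L}"
  then show "\<ominus> x \<in> {r \<in> carrier R. r \<otimes> b \<in> L}"
    using assms left_ideal_a_inv by (simp add: l_minus)
next
  fix c x assume "c \<in> carrier R" "x \<in> {r \<in> carrier R. r \<otimes> b \<in> L}"
  then show "c \<otimes> x \<in> {r \<in> carrier R. r \<otimes> b \<in> L}"
    using assms left_ideal_mult by (simp add: m_assoc)
qed auto

end

primrec left_span :: "('a, 'b) ring_scheme \<Rightarrow> 'a set \<Rightarrow> 'a list \<Rightarrow> 'a set" where
  "left_span S J [] = J"
| "left_span S J (a # as) = {r \<otimes>\<^bsub>S\<^esub> a \<oplus>\<^bsub>S\<^esub> z | r z. r \<in> carrier S \<and> z \<in> left_span S J as}"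

context ring
begin

lemma left_span_subset:
  assumes "left_ideal R L" "J \<subseteq> L" "set as \<subseteq> L"
  shows "left_span R J as \<subseteq> L"
  using assms(3)
proof (induction as)
  case (Cons a as)
  then show ?case
    using left_ideal_add[OF assms(1)] left_ideal_mult[OF assms(1)] by auto
qed (use assms(2) in simp)

lemma left_ideal_principal:
  assumes "a \<in> carrier R"
  shows "left_ideal R {r \<otimes> a | r. r \<in> carrier R}"
proof (rule left_idealI)
  show "\<zero> \<in> {r \<otimes> a | r. r \<in> carrier R}"
    using assms by (auto intro!: exI[of _ \<zero>])
  show "x \<oplus> y \<in> {r \<otimes> a | r. r \<in> carrier R}"
    if "x \<in> {r \<otimes> a | r. r \<in> carrier R}" "y \<in> {r \<otimes> a | r. r \<in> carrier R}" for x y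
    using that assms by (auto simp: l_distr[symmetric])
  show "\<ominus> x \<in> {r \<otimes> a | r. r \<in> carrier R}" if "x \<in> {r \<otimes> a | r. r \<in> carrier R}" for x
    using that assms by (auto simp: l_minus[symmetric])
  show "c \<otimes> x \<in> {r \<otimes> a | r. r \<in> carrier R}"
    if "c \<in> carrier R" "x \<in> {r \<otimes> a | r. r \<in> carrier R}" for c x
    using that assms by (auto simp: m_assoc[symmetric])
qed (use assms in auto)

lemma left_span_Cons_set_add:
  "left_span R J (a # as) = {r \<otimes> a | r. r \<in> carrier R} <+>\<^bsub>R\<^esub> left_span R J as"
  unfolding set_add_def' by auto

lemma left_ideal_left_span:
  assumes "left_ideal R J" "set as \<subseteq> carrier R"
  shows "left_ideal R (left_span R J as)"
  using assms(2)
proof (induction as)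
  case (Cons a as)
  then show ?case
    unfolding left_span_Cons_set_add by (simp add: left_ideal_set_add left_ideal_principal)
qed (simp add: assms(1))

lemma left_span_subset_Cons:
  assumes "left_ideal R J" "set (a # as) \<subseteq> carrier R"
  shows "left_span R J as \<subseteq> left_span R J (a # as)"
  unfolding left_span_Cons_set_add using assms
  by (intro left_ideal_set_add_upper(2) left_ideal_principal left_ideal_left_span) auto

lemma subset_left_span:
  assumes "left_ideal R J" "set as \<subseteq> carrier R"
  shows "J \<subseteq> left_span R J as"
  using assms(2) left_span_subset_Cons[OF assms(1)] by (induction as) auto

lemma set_subset_left_span:
  assumes "left_ideal R J" "set as \<subseteq> carrier R"
  shows "set as \<subseteq> left_span R J as"
  using assms(2)
proof (induction as)
  case (Cons a as)
  have "\<zero> \<in> left_span R J as"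
    using left_ideal_zero[OF left_ideal_left_span[OF assms(1)]] Cons.prems by simp
  moreover have "a = \<one> \<otimes> a \<oplus> \<zero>" using Cons.prems by simp
  ultimately have "a \<in> left_span R J (a # as)" by force
  then show ?case using Cons left_span_subset_Cons[OF assms(1)] by auto
qed simp

lemma left_ideal_zero_ideal: "left_ideal R {\<zero>}"
  by (rule left_idealI) auto

lemma left_genideal_eq_left_span:
  assumes "set as \<subseteq> carrier R"
  shows "left_genideal R (set as) = left_span R {\<zero>} as"
proof
  show "left_genideal R (set as) \<subseteq> left_span R {\<zero>} as"
    unfolding left_genideal_def
    using left_ideal_left_span[OF left_ideal_zero_ideal assms] set_subset_left_span[OF left_ideal_zero_ideal assms] by blast
  show "left_span R {\<zero>} as \<subseteq> left_genideal R (set as)"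
    unfolding left_genideal_def
  proof (rule Inter_greatest)
    fix L assume "L \<in> {L. left_ideal R L \<and> set as \<subseteq> L}"
    then have L: "left_ideal R L" "set as \<subseteq> L" by auto
    then show "left_span R {\<zero>} as \<subseteq> L"
      using left_span_subset[OF L(1) _ L(2)] left_ideal_zero[OF L(1)] by simp
  qed
qed

end

section \<open>Opposite rings\<close>

definition opposite_ring :: "('a, 'b) ring_scheme \<Rightarrow> ('a, 'b) ring_scheme" where
  "opposite_ring R = R\<lparr>mult := (\<lambda>x y. y \<otimes>\<^bsub>R\<^esub> x)\<rparr>"

lemma opposite_ring_simps [simp]:
  "carrier (opposite_ring R) = carrier R"
  "x \<otimes>\<^bsub>opposite_ring R\<^esub> y = y \<otimes>\<^bsub>R\<^esub> x"
  "\<one>\<^bsub>opposite_ring R\<^esub> = \<one>\<^bsub>R\<^esub>"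
  "add_monoid (opposite_ring R) = add_monoid R"
  "ring.add (opposite_ring R) = ring.add R"
  "\<zero>\<^bsub>opposite_ring R\<^esub> = \<zero>\<^bsub>R\<^esub>"
  by (simp_all add: opposite_ring_def)

lemma ring_opposite_ring: "ring R \<Longrightarrow> ring (opposite_ring R)"
proof (rule ringI)
  assume R: "ring R"
  show "abelian_group (opposite_ring R)"
    using ring.is_abelian_group[OF R]
    unfolding abelian_group_def abelian_monoid_def abelian_group_axioms_def by simp
  show "monoid (opposite_ring R)"
    using ring.is_monoid[OF R]
    by (intro monoidI) (auto simp: monoid.m_assoc monoid.m_closed)
  fix x y z assume "x \<in> carrier (opposite_ring R)" "y \<in> carrier (opposite_ring R)"
    "z \<in> carrier (opposite_ring R)"
  then show
    "(x \<oplus>\<^bsub>opposite_ring R\<^esub> y) \<otimes>\<^bsub>opposite_ring R\<^esub> z =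
       x \<otimes>\<^bsub>opposite_ring R\<^esub> z \<oplus>\<^bsub>opposite_ring R\<^esub> y \<otimes>\<^bsub>opposite_ring R\<^esub> z"
    "z \<otimes>\<^bsub>opposite_ring R\<^esub> (x \<oplus>\<^bsub>opposite_ring R\<^esub> y) =
       z \<otimes>\<^bsub>opposite_ring R\<^esub> x \<oplus>\<^bsub>opposite_ring R\<^esub> z \<otimes>\<^bsub>opposite_ring R\<^esub> y"
    by (simp_all add: ringE(3,4)[OF R])
qed

lemma ideal_opposite_ring: "ideal J R \<Longrightarrow> ideal J (opposite_ring R)"
  unfolding ideal_def ideal_axioms_def additive_subgroup_def
  using ring_opposite_ring by auto

lemma opposite_ring_Quot: "opposite_ring R Quot J = opposite_ring (R Quot J)"
proof -
  have rcos: "J +>\<^bsub>opposite_ring R\<^esub> a = J +>\<^bsub>R\<^esub> a" for a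
    by (simp add: a_r_coset_def)
  have "rcoset_mult (opposite_ring R) J = (\<lambda>A B. rcoset_mult R J B A)"
    unfolding rcoset_mult_def rcos by (auto intro!: ext)
  moreover have "a_rcosets\<^bsub>opposite_ring R\<^esub> J = a_rcosets\<^bsub>R\<^esub> J"
    by (simp add: A_RCOSETS_def)
  moreover have "set_add (opposite_ring R) = set_add R"
    by (simp add: set_add_def)
  ultimately show ?thesis
    unfolding FactRing_def opposite_ring_def by (simp add: rcos[unfolded opposite_ring_def])
qed

lemma completion_carrier_opposite_ring:
  "completion_carrier (opposite_ring R) I = completion_carrier R I"
  unfolding completion_carrier_def opposite_ring_Quot by simp

lemma completion_opposite_ring: "completion (opposite_ring R) I = opposite_ring (completion R I)"
  unfolding completion_def opposite_ring_Quot completion_carrier_opposite_ring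
  by (simp add: opposite_ring_def)

lemma completion_topology_opposite_ring:
  "completion_topology (opposite_ring R) I = completion_topology R I"
  unfolding completion_topology_def opposite_ring_Quot completion_carrier_opposite_ring by simp

lemma left_ideal_opposite_ring: "left_ideal (opposite_ring S) L = right_ideal S L"
  unfolding right_ideal_def left_ideal_def additive_subgroup_def by simp

lemma left_genideal_opposite_ring: "left_genideal (opposite_ring S) A = right_genideal S A"
  unfolding right_genideal_def left_genideal_def left_ideal_opposite_ring ..

lemma left_artinian_opposite_ring: "left_artinian (opposite_ring S) = right_artinian S"
  unfolding left_artinian_def right_artinian_def left_ideal_opposite_ring ..

section \<open>The completion of a filtered ring\<close>

lemma completion_simps:
  "carrier (completion R I) = completion_carrier R I"
  "x \<otimes>\<^bsub>completion R I\<^esub> y = (\<lambda>j. x j \<otimes>\<^bsub>R Quot I j\<^esub> y j)"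
  "x \<oplus>\<^bsub>completion R I\<^esub> y = (\<lambda>j. x j \<oplus>\<^bsub>R Quot I j\<^esub> y j)"
  "\<zero>\<^bsub>completion R I\<^esub> = (\<lambda>j. \<zero>\<^bsub>R Quot I j\<^esub>)"
  "\<one>\<^bsub>completion R I\<^esub> = (\<lambda>j. \<one>\<^bsub>R Quot I j\<^esub>)"
  by (simp_all add: completion_def)

lemma closedin_completion_topology_levelwise:
  "closedin (completion_topology R I) {x \<in> completion_carrier R I. \<forall>j. P j (x j)}"
proof -
  let ?Q = "\<lambda>j. discrete_topology (carrier (R Quot I j))"
  have topspace: "topspace (completion_topology R I) = completion_carrier R I"
    unfolding completion_topology_def by (auto simp: completion_carrier_def PiE_iff)
  have "continuous_map (completion_topology R I) (?Q j) (\<lambda>x. x j)" for j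
    unfolding completion_topology_def
    by (intro continuous_map_from_subtopology continuous_map_product_projection) simp
  then have "closedin (completion_topology R I)
      {x \<in> topspace (completion_topology R I). x j \<in> {c \<in> carrier (R Quot I j). P j c}}" for j
    by (rule closedin_continuous_map_preimage) simp
  then have "closedin (completion_topology R I)
      (\<Inter>j. {x \<in> completion_carrier R I. x j \<in> {c \<in> carrier (R Quot I j). P j c}})"
    unfolding topspace by (intro closedin_INT) auto
  moreover have "(\<Inter>j. {x \<in> completion_carrier R I. x j \<in> {c \<in> carrier (R Quot I j). P j c}}) =
      {x \<in> completion_carrier R I. \<forall>j. P j (x j)}"
    by (auto simp: completion_carrier_def)
  ultimately show ?thesis by simp
qed

definition coset_rep :: "'a set \<Rightarrow> 'a" where
  "coset_rep c = (SOME a. a \<in> c)"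

locale filtered_ring = ring R for R :: "('a, 'b) ring_scheme" (structure) +
  fixes I :: "nat \<Rightarrow> 'a set"
  assumes ideal_I: "ideal (I j) R"
    and I_Suc_subset: "I (Suc j) \<subseteq> I j"
begin

abbreviation Rbar :: "(nat \<Rightarrow> 'a set) ring" where
  "Rbar \<equiv> completion R I"

lemma I_antimono: "i \<le> j \<Longrightarrow> I j \<subseteq> I i"
  using lift_Suc_antimono_le[of I] I_Suc_subset by blast

lemma ring_Quot: "ring (R Quot I j)"
  by (rule ideal.quotient_is_ring[OF ideal_I])

lemma ring_hom_ring_rcos: "ring_hom_ring R (R Quot I j) ((+>) (I j))"
  by (rule ideal.rcos_ring_hom_ring[OF ideal_I])

lemma I_subset_carrier: "I j \<subseteq> carrier R"
  using ideal.Icarr[OF ideal_I] by blast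

lemma rcos_eq_iff: "a \<in> carrier R \<Longrightarrow> b \<in> carrier R \<Longrightarrow> I j +> a = I j +> b \<longleftrightarrow> a \<ominus> b \<in> I j"
  using quotient_eq_iff_same_a_r_cos[OF ideal_I] by simp

lemma carrier_Quot: "c \<in> carrier (R Quot I j) \<longleftrightarrow> (\<exists>a\<in>carrier R. c = I j +> a)"
  by (auto simp: FactRing_def A_RCOSETS_def')

lemma rcos_antimono: "i \<le> j \<Longrightarrow> I j +> a \<subseteq> I i +> a"
  using I_antimono by (auto simp: a_r_coset_def')

lemma rcos_coset_rep:
  assumes "c \<in> carrier (R Quot I j)"
  shows "coset_rep c \<in> c" "coset_rep c \<in> carrier R" "c = I j +> coset_rep c"
proof -
  interpret ideal "I j" R by (rule ideal_I)
  obtain a where a: "a \<in> carrier R" "c = I j +> a" using assms carrier_Quot by blast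
  then have "a \<in> c" using a_rcos_self by simp
  then show rep: "coset_rep c \<in> c" unfolding coset_rep_def by (rule someI)
  then have "coset_rep c \<in> I j +> a" using a(2) by simp
  then have "I j +> a = I j +> coset_rep c" using a(1) by (rule a_repr_independence')
  with a(2) show "c = I j +> coset_rep c" by (rule trans)
  show "coset_rep c \<in> carrier R"
    using rep a(2) a_r_coset_subset_G[OF I_subset_carrier a(1)] by auto
qed

lemma completion_carrier_rcos_coset_rep:
  assumes x: "x \<in> completion_carrier R I" and ij: "i \<le> j"
  shows "x i = I i +> coset_rep (x j)"
proof -
  interpret ideal "I i" R by (rule ideal_I)
  have "x i \<in> carrier (R Quot I i)" using x by (simp add: completion_carrier_def)
  then obtain b where b: "b \<in> carrier R" "x i = I i +> b" using carrier_Quot by blast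
  have "x j \<in> carrier (R Quot I j)" using x by (simp add: completion_carrier_def)
  then have "coset_rep (x j) \<in> x j" by (rule rcos_coset_rep(1))
  also have "x j \<subseteq> x i" using x ij by (simp add: completion_carrier_def)
  finally have "coset_rep (x j) \<in> I i +> b" using b(2) by simp
  then have "I i +> b = I i +> coset_rep (x j)" using b(1) by (rule a_repr_independence')
  with b(2) show ?thesis by (rule trans)
qed

lemma completion_carrier_iff:
  "x \<in> completion_carrier R I \<longleftrightarrow> (\<forall>j. \<exists>a\<in>carrier R. \<forall>i\<le>j. x i = I i +> a)"
proof
  assume x: "x \<in> completion_carrier R I"
  show "\<forall>j. \<exists>a\<in>carrier R. \<forall>i\<le>j. x i = I i +> a"
  proof
    fix j
    have "x j \<in> carrier (R Quot I j)" using x by (simp add: completion_carrier_def)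
    then show "\<exists>a\<in>carrier R. \<forall>i\<le>j. x i = I i +> a"
      using rcos_coset_rep(2) completion_carrier_rcos_coset_rep[OF x] by blast
  qed
next
  assume x: "\<forall>j. \<exists>a\<in>carrier R. \<forall>i\<le>j. x i = I i +> a"
  show "x \<in> completion_carrier R I"
    unfolding completion_carrier_def
  proof (intro CollectI conjI allI impI)
    fix j
    obtain a where "a \<in> carrier R" "\<forall>i\<le>j. x i = I i +> a" using x by blast
    then show "x j \<in> carrier (R Quot I j)" using carrier_Quot by auto
  next
    fix i j :: nat assume ij: "i \<le> j"
    obtain a where "\<forall>i'\<le>j. x i' = I i' +> a" using x by blast
    then show "x j \<subseteq> x i" using rcos_antimono[OF ij] ij by simp
  qed
qed

lemma rcos_add: "a \<in> carrier R \<Longrightarrow> b \<in> carrier R \<Longrightarrow>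
    (I j +> a) \<oplus>\<^bsub>R Quot I j\<^esub> (I j +> b) = I j +> (a \<oplus> b)"
  using ring_hom_add[OF ideal.rcos_ring_hom[OF ideal_I]] by simp

lemma rcos_mult: "a \<in> carrier R \<Longrightarrow> b \<in> carrier R \<Longrightarrow>
    (I j +> a) \<otimes>\<^bsub>R Quot I j\<^esub> (I j +> b) = I j +> (a \<otimes> b)"
  using ring_hom_mult[OF ideal.rcos_ring_hom[OF ideal_I]] by simp

lemma rcos_a_inv:
  assumes "a \<in> carrier R"
  shows "\<ominus>\<^bsub>R Quot I j\<^esub> (I j +> a) = I j +> \<ominus> a"
proof -
  interpret ring_hom_ring R "R Quot I j" "(+>) (I j)" by (rule ring_hom_ring_rcos)
  show ?thesis using assms by simp
qed

lemma rcos_zero: "\<zero>\<^bsub>R Quot I j\<^esub> = I j +> \<zero>"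
proof -
  interpret ring_hom_ring R "R Quot I j" "(+>) (I j)" by (rule ring_hom_ring_rcos)
  show ?thesis by simp
qed

lemma rcos_one: "\<one>\<^bsub>R Quot I j\<^esub> = I j +> \<one>"
  by (simp add: FactRing_def)

lemma completion_carrier_closed:
  assumes x: "x \<in> completion_carrier R I" and y: "y \<in> completion_carrier R I"
    and f: "\<And>j a b. a \<in> carrier R \<Longrightarrow> b \<in> carrier R \<Longrightarrow> f j (I j +> a) (I j +> b) = I j +> g a b"
    and g: "\<And>a b. a \<in> carrier R \<Longrightarrow> b \<in> carrier R \<Longrightarrow> g a b \<in> carrier R"
  shows "(\<lambda>j. f j (x j) (y j)) \<in> completion_carrier R I"
  unfolding completion_carrier_iff
proof
  fix j
  obtain a where "a \<in> carrier R" "\<forall>i\<le>j. x i = I i +> a"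
    using x unfolding completion_carrier_iff by blast
  moreover obtain b where "b \<in> carrier R" "\<forall>i\<le>j. y i = I i +> b"
    using y unfolding completion_carrier_iff by blast
  ultimately show "\<exists>c\<in>carrier R. \<forall>i\<le>j. f i (x i) (y i) = I i +> c" using f g by auto
qed

lemma completion_apply_closed: "x \<in> carrier Rbar \<Longrightarrow> x j \<in> carrier (R Quot I j)"
  by (simp add: completion_simps completion_carrier_def)

lemma completion_closed:
  assumes "x \<in> carrier Rbar" "y \<in> carrier Rbar"
  shows "x \<oplus>\<^bsub>Rbar\<^esub> y \<in> carrier Rbar" "x \<otimes>\<^bsub>Rbar\<^esub> y \<in> carrier Rbar"
    "(\<lambda>j. \<ominus>\<^bsub>R Quot I j\<^esub> x j) \<in> carrier Rbar"
  unfolding completion_simps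
proof -
  show "(\<lambda>j. x j \<oplus>\<^bsub>R Quot I j\<^esub> y j) \<in> completion_carrier R I"
    using assms unfolding completion_simps
    by (rule completion_carrier_closed[where g = "(\<oplus>)"]) (simp_all add: rcos_add)
  show "(\<lambda>j. x j \<otimes>\<^bsub>R Quot I j\<^esub> y j) \<in> completion_carrier R I"
    using assms unfolding completion_simps
    by (rule completion_carrier_closed[where g = "(\<otimes>)"]) (simp_all add: rcos_mult)
  show "(\<lambda>j. \<ominus>\<^bsub>R Quot I j\<^esub> x j) \<in> completion_carrier R I"
    using assms(1) assms(1) unfolding completion_simps
    by (rule completion_carrier_closed[where f = "\<lambda>j c d. \<ominus>\<^bsub>R Quot I j\<^esub> c" and g = "\<lambda>a b. \<ominus> a"])
      (simp_all add: rcos_a_inv)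
qed

lemma completion_zero_one_closed: "\<zero>\<^bsub>Rbar\<^esub> \<in> carrier Rbar" "\<one>\<^bsub>Rbar\<^esub> \<in> carrier Rbar"
  unfolding completion_simps completion_carrier_iff rcos_zero rcos_one by blast+

lemma ring_completion: "ring Rbar"
proof -
  have Q: "ring (R Quot I j)" for j by (rule ring_Quot)
  note pointwise = completion_simps completion_apply_closed
    ring.ring_simprules[OF Q] monoid.r_one[OF ring.is_monoid[OF Q]]
  have neg: "\<exists>y\<in>carrier Rbar. y \<oplus>\<^bsub>Rbar\<^esub> x = \<zero>\<^bsub>Rbar\<^esub>" if "x \<in> carrier Rbar" for x
  proof
    show "(\<lambda>j. \<ominus>\<^bsub>R Quot I j\<^esub> x j) \<in> carrier Rbar" using completion_closed(3)[OF that that] .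
    show "(\<lambda>j. \<ominus>\<^bsub>R Quot I j\<^esub> x j) \<oplus>\<^bsub>Rbar\<^esub> x = \<zero>\<^bsub>Rbar\<^esub>" using that by (simp add: pointwise)
  qed
  show ?thesis
  proof (rule ringI)
    show "abelian_group Rbar"
    proof (rule abelian_groupI)
      show "x \<oplus>\<^bsub>Rbar\<^esub> y \<oplus>\<^bsub>Rbar\<^esub> z = x \<oplus>\<^bsub>Rbar\<^esub> (y \<oplus>\<^bsub>Rbar\<^esub> z)"
        if "x \<in> carrier Rbar" "y \<in> carrier Rbar" "z \<in> carrier Rbar" for x y z
        using that by (simp add: pointwise)
      show "x \<oplus>\<^bsub>Rbar\<^esub> y = y \<oplus>\<^bsub>Rbar\<^esub> x" if "x \<in> carrier Rbar" "y \<in> carrier Rbar" for x y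
        using that by (simp add: pointwise)
      show "\<zero>\<^bsub>Rbar\<^esub> \<oplus>\<^bsub>Rbar\<^esub> x = x" if "x \<in> carrier Rbar" for x
        using that by (simp add: pointwise)
    qed (simp_all add: completion_closed completion_zero_one_closed neg)
    show "monoid Rbar"
    proof (rule monoidI)
      show "x \<otimes>\<^bsub>Rbar\<^esub> y \<otimes>\<^bsub>Rbar\<^esub> z = x \<otimes>\<^bsub>Rbar\<^esub> (y \<otimes>\<^bsub>Rbar\<^esub> z)"
        if "x \<in> carrier Rbar" "y \<in> carrier Rbar" "z \<in> carrier Rbar" for x y z
        using that by (simp add: pointwise)
      show "\<one>\<^bsub>Rbar\<^esub> \<otimes>\<^bsub>Rbar\<^esub> x = x" "x \<otimes>\<^bsub>Rbar\<^esub> \<one>\<^bsub>Rbar\<^esub> = x" if "x \<in> carrier Rbar" for x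
        using that by (simp_all add: pointwise)
    qed (simp_all add: completion_closed completion_zero_one_closed)
    show "(x \<oplus>\<^bsub>Rbar\<^esub> y) \<otimes>\<^bsub>Rbar\<^esub> z = x \<otimes>\<^bsub>Rbar\<^esub> z \<oplus>\<^bsub>Rbar\<^esub> y \<otimes>\<^bsub>Rbar\<^esub> z"
      "z \<otimes>\<^bsub>Rbar\<^esub> (x \<oplus>\<^bsub>Rbar\<^esub> y) = z \<otimes>\<^bsub>Rbar\<^esub> x \<oplus>\<^bsub>Rbar\<^esub> z \<otimes>\<^bsub>Rbar\<^esub> y"
      if "x \<in> carrier Rbar" "y \<in> carrier Rbar" "z \<in> carrier Rbar" for x y z
      using that by (simp_all add: pointwise)
  qed
qed

sublocale completion: ring Rbar
  by (rule ring_completion)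

lemma ring_hom_ring_proj: "ring_hom_ring Rbar (R Quot I j) (\<lambda>x. x j)"
  by (intro ring_hom_ringI2 ring_completion ring_Quot ring_hom_memI)
    (simp_all add: completion_simps completion_carrier_def)

lemma left_ideal_I: "left_ideal R (I j)"
  by (rule left_ideal_of_ideal[OF ideal_I])

lemma completion_coset_rep:
  assumes "x \<in> carrier Rbar"
  shows "coset_rep (x j) \<in> carrier R" "I j +> coset_rep (x j) = x j"
proof -
  have "x j \<in> carrier (R Quot I j)"
    using assms by (simp add: completion_simps completion_carrier_def)
  then show "coset_rep (x j) \<in> carrier R" "I j +> coset_rep (x j) = x j"
    using rcos_coset_rep(2,3) by auto
qed

lemma completion_apply_rcos:
  assumes "x \<in> carrier Rbar"
  obtains a where "a \<in> carrier R" "x j = I j +> a"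
proof -
  have "x j \<in> carrier (R Quot I j)"
    using assms by (simp add: completion_simps completion_carrier_def)
  then show ?thesis using that carrier_Quot by blast
qed

lemma completion_coset_rep_compat:
  assumes x: "x \<in> carrier Rbar" and ij: "i \<le> j"
  shows "coset_rep (x j) \<ominus> coset_rep (x i) \<in> I i"
proof -
  have x': "x \<in> completion_carrier R I" using x by (simp add: completion_simps)
  have "x i = I i +> coset_rep (x j)" by (rule completion_carrier_rcos_coset_rep[OF x' ij])
  moreover have "x i = I i +> coset_rep (x i)" by (rule completion_carrier_rcos_coset_rep[OF x' order_refl])
  ultimately have "I i +> coset_rep (x j) = I i +> coset_rep (x i)" by (rule trans[OF sym])
  then show ?thesis using rcos_eq_iff completion_coset_rep(1)[OF x] by blast
qed

lemma rcos_seq_in_completion: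
  assumes f: "\<And>j. f j \<in> carrier R" and Cauchy: "\<And>j. f (Suc j) \<ominus> f j \<in> I j"
  shows "(\<lambda>j. I j +> f j) \<in> carrier Rbar"
proof -
  have "f j \<ominus> f i \<in> I i" if "i \<le> j" for i j
    using that
  proof (induction rule: dec_induct)
    case base
    have "f i \<ominus> f i = \<zero>" using f[of i] by (simp add: minus_eq r_neg)
    then show ?case using left_ideal_zero[OF left_ideal_I] by simp
  next
    case (step n)
    have "f (Suc n) \<ominus> f i = (f (Suc n) \<ominus> f n) \<oplus> (f n \<ominus> f i)"
      using f by algebra
    moreover have "f (Suc n) \<ominus> f n \<in> I i" using Cauchy[of n] I_antimono[OF step.hyps(1)] by blast
    ultimately show ?case using step.IH left_ideal_add[OF left_ideal_I] by simp
  qed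
  then have "I i +> f j = I i +> f i" if "i \<le> j" for i j
    using rcos_eq_iff f that by blast
  then have "\<forall>i\<le>j. I i +> f i = I i +> f j" for j by (blast intro: sym)
  then show ?thesis
    unfolding completion_simps completion_carrier_iff using f by blast
qed

lemma rcos_subset_left_ideal_iff:
  assumes "left_ideal R L" "I j \<subseteq> L" "a \<in> carrier R"
  shows "I j +> a \<subseteq> L \<longleftrightarrow> a \<in> L"
proof
  interpret ideal "I j" R by (rule ideal_I)
  show "I j +> a \<subseteq> L \<Longrightarrow> a \<in> L" using a_rcos_self[OF assms(3)] by blast
  show "a \<in> L \<Longrightarrow> I j +> a \<subseteq> L"
    using assms left_ideal_add by (auto simp: a_r_coset_def')
qed

(* The preimage in R of the left ideal of R/I_j generated by the j-th components of as. *)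
definition level_span :: "(nat \<Rightarrow> 'a set) list \<Rightarrow> nat \<Rightarrow> 'a set" where
  "level_span as j = left_span R (I j) (map (\<lambda>x. coset_rep (x j)) as)"

lemma level_span_Cons:
  "level_span (a # as) j = {r \<otimes> coset_rep (a j) \<oplus> z | r z. r \<in> carrier R \<and> z \<in> level_span as j}"
  by (simp add: level_span_def)

lemma left_ideal_level_span:
  "set as \<subseteq> carrier Rbar \<Longrightarrow> left_ideal R (level_span as j)"
  unfolding level_span_def using completion_coset_rep(1)
  by (intro left_ideal_left_span left_ideal_I) auto

lemma I_subset_level_span:
  "set as \<subseteq> carrier Rbar \<Longrightarrow> I j \<subseteq> level_span as j"
  unfolding level_span_def using completion_coset_rep(1)
  by (intro subset_left_span left_ideal_I) auto

lemma level_span_antimono: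
  assumes as: "set as \<subseteq> carrier Rbar" and ij: "i \<le> j"
  shows "level_span as j \<subseteq> level_span as i"
proof -
  note L = left_ideal_level_span[OF as, of i]
  have "coset_rep (x j) \<in> level_span as i" if x: "x \<in> set as" for x
  proof -
    have xc: "x \<in> carrier Rbar" using x as by blast
    have "set (map (\<lambda>x. coset_rep (x i)) as) \<subseteq> carrier R"
      using as completion_coset_rep(1) by auto
    then have "set (map (\<lambda>x. coset_rep (x i)) as) \<subseteq> level_span as i"
      unfolding level_span_def by (rule set_subset_left_span[OF left_ideal_I])
    then have "coset_rep (x i) \<in> level_span as i" using x by auto
    moreover have "coset_rep (x j) \<ominus> coset_rep (x i) \<in> level_span as i"
      using completion_coset_rep_compat[OF xc ij] I_subset_level_span[OF as] by blast
    ultimately show ?thesis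
      using left_ideal_minus_cancel[OF L] completion_coset_rep(1)[OF xc] by blast
  qed
  then have "set (map (\<lambda>x. coset_rep (x j)) as) \<subseteq> level_span as i" by auto
  moreover have "I j \<subseteq> level_span as i"
    using I_antimono[OF ij] I_subset_level_span[OF as] by blast
  ultimately show ?thesis
    using left_span_subset[OF L] unfolding level_span_def[of as j] by blast
qed

lemma level_span_Cons_iff:
  assumes a: "a \<in> carrier Rbar" and as: "set as \<subseteq> carrier Rbar" and y: "y \<in> carrier R"
  shows "y \<in> level_span (a # as) j \<longleftrightarrow> (\<exists>t\<in>carrier R. y \<ominus> t \<otimes> coset_rep (a j) \<in> level_span as j)"
proof -
  define \<alpha> where "\<alpha> = coset_rep (a j)"
  have \<alpha>: "\<alpha> \<in> carrier R" unfolding \<alpha>_def using completion_coset_rep(1)[OF a] .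
  note L = left_ideal_subset[OF left_ideal_level_span[OF as]]
  have "y \<in> level_span (a # as) j \<longleftrightarrow> (\<exists>t\<in>carrier R. \<exists>z\<in>level_span as j. y = t \<otimes> \<alpha> \<oplus> z)"
    unfolding level_span_Cons \<alpha>_def by blast
  also have "\<dots> \<longleftrightarrow> (\<exists>t\<in>carrier R. y \<ominus> t \<otimes> \<alpha> \<in> level_span as j)"
  proof (intro bex_cong refl iffI)
    fix t assume t: "t \<in> carrier R"
    show "\<exists>z\<in>level_span as j. y = t \<otimes> \<alpha> \<oplus> z \<Longrightarrow> y \<ominus> t \<otimes> \<alpha> \<in> level_span as j"
    proof (elim bexE)
      fix z assume "z \<in> level_span as j" "y = t \<otimes> \<alpha> \<oplus> z"
      moreover have "z \<in> carrier R" using calculation(1) L by blast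
      then have "(t \<otimes> \<alpha> \<oplus> z) \<ominus> t \<otimes> \<alpha> = z" using t \<alpha> by algebra
      ultimately show "y \<ominus> t \<otimes> \<alpha> \<in> level_span as j" by simp
    qed
    have "y = t \<otimes> \<alpha> \<oplus> (y \<ominus> t \<otimes> \<alpha>)" using y t \<alpha> by algebra
    then show "y \<ominus> t \<otimes> \<alpha> \<in> level_span as j \<Longrightarrow> \<exists>z\<in>level_span as j. y = t \<otimes> \<alpha> \<oplus> z" by blast
  qed
  finally show ?thesis unfolding \<alpha>_def .
qed

lemma completion_minus_mult_apply:
  assumes "y \<in> carrier Rbar" "r \<in> carrier Rbar" "a \<in> carrier Rbar"
    and "\<psi> \<in> carrier R" "\<rho> \<in> carrier R" "\<alpha> \<in> carrier R"
    and "y j = I j +> \<psi>" "r j = I j +> \<rho>" "a j = I j +> \<alpha>"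
  shows "(y \<ominus>\<^bsub>Rbar\<^esub> r \<otimes>\<^bsub>Rbar\<^esub> a) j = I j +> (\<psi> \<ominus> \<rho> \<otimes> \<alpha>)"
proof -
  interpret proj: ring_hom_ring Rbar "R Quot I j" "\<lambda>x. x j" by (rule ring_hom_ring_proj)
  have "(y \<ominus>\<^bsub>Rbar\<^esub> r \<otimes>\<^bsub>Rbar\<^esub> a) j = y j \<oplus>\<^bsub>R Quot I j\<^esub> \<ominus>\<^bsub>R Quot I j\<^esub> (r j \<otimes>\<^bsub>R Quot I j\<^esub> a j)"
    using assms(1-3) by (simp add: completion.minus_eq)
  also have "\<dots> = I j +> (\<psi> \<oplus> \<ominus> (\<rho> \<otimes> \<alpha>))"
    using assms(4-) by (simp add: rcos_add rcos_mult rcos_a_inv)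
  finally show ?thesis using assms(4-6) by (simp add: minus_eq)
qed

lemma left_span_completion_levelwise:
  assumes "set as \<subseteq> carrier Rbar" "y \<in> left_span Rbar {\<zero>\<^bsub>Rbar\<^esub>} as"
  shows "y j \<subseteq> level_span as j"
  using assms
proof (induction as arbitrary: y)
  case Nil
  then show ?case by (simp add: completion_simps level_span_def FactRing_def)
next
  case (Cons a as)
  then obtain r z where y: "y = r \<otimes>\<^bsub>Rbar\<^esub> a \<oplus>\<^bsub>Rbar\<^esub> z"
    and r: "r \<in> carrier Rbar" and z: "z \<in> left_span Rbar {\<zero>\<^bsub>Rbar\<^esub>} as"
    by auto
  have a: "a \<in> carrier Rbar" and as: "set as \<subseteq> carrier Rbar" using Cons.prems by auto
  note L = left_ideal_level_span I_subset_level_span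
  have zc: "z \<in> carrier Rbar"
    using z completion.left_ideal_subset[OF completion.left_ideal_left_span[OF completion.left_ideal_zero_ideal as]]
    by blast
  obtain \<zeta> where \<zeta>: "\<zeta> \<in> carrier R" "z j = I j +> \<zeta>" using completion_apply_rcos[OF zc] .
  obtain \<rho> where \<rho>: "\<rho> \<in> carrier R" "r j = I j +> \<rho>" using completion_apply_rcos[OF r] .
  define \<alpha> where "\<alpha> = coset_rep (a j)"
  have \<alpha>: "\<alpha> \<in> carrier R" "a j = I j +> \<alpha>"
    unfolding \<alpha>_def using completion_coset_rep[OF a] by simp_all
  have "z j \<subseteq> level_span as j" by (rule Cons.IH[OF as z])
  then have "\<zeta> \<in> level_span as j"
    using rcos_subset_left_ideal_iff[OF L[OF as] \<zeta>(1)] \<zeta>(2) by simp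
  then have "\<rho> \<otimes> \<alpha> \<oplus> \<zeta> \<in> level_span (a # as) j"
    using \<rho>(1) unfolding level_span_Cons \<alpha>_def by blast
  moreover have "y j = I j +> (\<rho> \<otimes> \<alpha> \<oplus> \<zeta>)"
    using \<zeta> \<rho> \<alpha> by (simp add: y completion_simps rcos_add rcos_mult)
  ultimately show ?case
    using rcos_subset_left_ideal_iff[OF L[OF Cons.prems(1)]] \<zeta>(1) \<rho>(1) \<alpha>(1) by simp
qed

end

section \<open>Artinian quotients\<close>

locale filtered_left_artinian_ring = filtered_ring +
  assumes left_artinian_Quot: "left_artinian (R Quot I j)"
begin

lemma left_ideals_containing_I_stabilize:
  assumes W: "\<And>n. left_ideal R (W n)" and I_W: "\<And>n. I j \<subseteq> W n"
    and W_Suc: "\<And>n. W (Suc n) \<subseteq> W n"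
  shows "\<exists>N. \<forall>n\<ge>N. W n = W N"
proof -
  interpret rcos: ring_hom_ring R "R Quot I j" "(+>) (I j)" by (rule ring_hom_ring_rcos)
  define V where "V n = (+>) (I j) ` W n" for n
  have "left_ideal (R Quot I j) (V n)" for n
    unfolding left_ideal_def
  proof (intro conjI ballI)
    have "subgroup (W n) (add_monoid R)"
      using W[of n] by (simp add: left_ideal_def additive_subgroup.a_subgroup)
    then show "additive_subgroup (V n) (R Quot I j)"
      unfolding V_def by (intro additive_subgroupI rcos.img_is_add_subgroup)
  next
    fix c v assume "c \<in> carrier (R Quot I j)" "v \<in> V n"
    then obtain b w where b: "b \<in> carrier R" "c = I j +> b" and w: "w \<in> W n" "v = I j +> w"
      unfolding V_def carrier_Quot by blast
    then have "c \<otimes>\<^bsub>R Quot I j\<^esub> v = I j +> (b \<otimes> w)"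
      using rcos_mult left_ideal_subset[OF W] by blast
    moreover have "b \<otimes> w \<in> W n" using left_ideal_mult[OF W b(1) w(1)] .
    ultimately show "c \<otimes>\<^bsub>R Quot I j\<^esub> v \<in> V n" unfolding V_def by blast
  qed
  moreover have "V (Suc n) \<subseteq> V n" for n unfolding V_def using W_Suc by blast
  ultimately obtain N where N: "\<And>n. N \<le> n \<Longrightarrow> V n = V N"
    using left_artinian_Quot[of j] unfolding left_artinian_def by blast
  have "W N \<subseteq> W n" if "N \<le> n" for n
  proof
    fix w assume w: "w \<in> W N"
    then have "I j +> w \<in> V n" using N[OF that] unfolding V_def by blast
    then obtain w' where w': "w' \<in> W n" "I j +> w = I j +> w'" unfolding V_def by blast
    have "w \<in> carrier R" "w' \<in> carrier R" using w w' left_ideal_subset[OF W] by blast+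
    then have "w \<ominus> w' \<in> W n" using w'(2) rcos_eq_iff I_W by blast
    then show "w \<in> W n" using left_ideal_minus_cancel[OF W \<open>w \<in> carrier R\<close> _ w'(1)] by blast
  qed
  moreover have "W n \<subseteq> W N" if "N \<le> n" for n
    using lift_Suc_antimono_le[of W, OF W_Suc that] .
  ultimately show ?thesis by blast
qed

lemma left_ideals_plus_I_stabilize:
  assumes K: "\<And>m. left_ideal R (K m)" and K_Suc: "\<And>m. K (Suc m) \<subseteq> K m"
  obtains N where "\<And>j m. N j \<le> m \<Longrightarrow> K m <+>\<^bsub>R\<^esub> I j = K (N j) <+>\<^bsub>R\<^esub> I j"
proof -
  have "\<exists>N. \<forall>m\<ge>N. K m <+>\<^bsub>R\<^esub> I j = K N <+>\<^bsub>R\<^esub> I j" for j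
  proof (rule left_ideals_containing_I_stabilize)
    show "left_ideal R (K m <+>\<^bsub>R\<^esub> I j)" for m
      using left_ideal_set_add[OF K left_ideal_I] .
    show "I j \<subseteq> K m <+>\<^bsub>R\<^esub> I j" for m
      using left_ideal_set_add_upper(2)[OF K left_ideal_I] .
    show "K (Suc m) <+>\<^bsub>R\<^esub> I j \<subseteq> K m <+>\<^bsub>R\<^esub> I j" for m
      using K_Suc unfolding set_add_def' by blast
  qed
  then show ?thesis using that by metis
qed

lemma stable_coset_membership:
  assumes K: "\<And>m. left_ideal R (K m)" and K_Suc: "\<And>m. K (Suc m) \<subseteq> K m"
    and t: "\<And>m. t m \<in> carrier R" and t_compat: "\<And>j m. j \<le> m \<Longrightarrow> t m \<ominus> t j \<in> K j"
    and N: "\<And>m. N \<le> m \<Longrightarrow> K m <+>\<^bsub>R\<^esub> I j = K N <+>\<^bsub>R\<^esub> I j"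
    and M: "N \<le> M" and r: "r \<in> carrier R" "r \<ominus> t M \<in> K M <+>\<^bsub>R\<^esub> I j"
  shows "r \<ominus> t m \<in> K m <+>\<^bsub>R\<^esub> I j"
proof -
  define W where "W m = K m <+>\<^bsub>R\<^esub> I j" for m
  have W: "left_ideal R (W m)" and K_W: "K m \<subseteq> W m" for m
    unfolding W_def using left_ideal_set_add[OF K left_ideal_I] left_ideal_set_add_upper(1)[OF K left_ideal_I]
    by auto
  have split: "r \<ominus> t m = (r \<ominus> t M) \<oplus> (t M \<ominus> t m)" using r t by algebra
  show ?thesis
  proof (cases "m \<le> M")
    case True
    have "W M \<subseteq> W m"
      using lift_Suc_antimono_le[of K, OF K_Suc True] unfolding W_def set_add_def' by blast
    then have "r \<ominus> t M \<in> W m" using r(2) unfolding W_def by blast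
    moreover have "t M \<ominus> t m \<in> W m" using t_compat[OF True] K_W by blast
    ultimately show ?thesis using split left_ideal_add[OF W] unfolding W_def by simp
  next
    case False
    then have W_eq: "W m = W M" using N[of m] N[OF M] M unfolding W_def by simp
    have "t m \<ominus> t M \<in> W M" using t_compat[of M m] False K_W by auto
    moreover have "t M \<ominus> t m = \<ominus> (t m \<ominus> t M)" using t by algebra
    ultimately have "t M \<ominus> t m \<in> W M" using left_ideal_a_inv[OF W] by simp
    then show ?thesis using split r(2) W_eq left_ideal_add[OF W] unfolding W_def by simp
  qed
qed

lemma compatible_coset_sequence:
  assumes K: "\<And>m. left_ideal R (K m)" and I_K: "\<And>m. I m \<subseteq> K m"
    and K_Suc: "\<And>m. K (Suc m) \<subseteq> K m"
    and t: "\<And>m. t m \<in> carrier R" and t_compat: "\<And>j m. j \<le> m \<Longrightarrow> t m \<ominus> t j \<in> K j"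
  shows "\<exists>\<rho>. \<forall>j. (\<rho> j \<in> carrier R \<and> \<rho> j \<ominus> t j \<in> K j) \<and> \<rho> (Suc j) \<ominus> \<rho> j \<in> I j"
proof -
  obtain N where N: "\<And>j m. N j \<le> m \<Longrightarrow> K m <+>\<^bsub>R\<^esub> I j = K (N j) <+>\<^bsub>R\<^esub> I j"
    using left_ideals_plus_I_stabilize[of K, OF K K_Suc] by blast
  define S where "S j = {r \<in> carrier R. \<forall>m. r \<ominus> t m \<in> K m <+>\<^bsub>R\<^esub> I j}" for j
  have S_intro: "r \<in> S j" if "N j \<le> M" "r \<in> carrier R" "r \<ominus> t M \<in> K M <+>\<^bsub>R\<^esub> I j" for r j M
    using stable_coset_membership[OF K K_Suc t t_compat N that] that(2) unfolding S_def by blast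
  have S_start: "t (N j) \<in> S j" for j
    using S_intro[OF order_refl t] left_ideal_zero[OF left_ideal_set_add[OF K left_ideal_I]] t
    by (simp add: minus_eq r_neg)
  have S_step: "\<exists>r'. r' \<in> S (Suc j) \<and> r' \<ominus> r \<in> I j" if r: "r \<in> S j" for r j
  proof -
    define M where "M = max (N j) (N (Suc j))"
    have rc: "r \<in> carrier R" and "r \<ominus> t M \<in> K M <+>\<^bsub>R\<^esub> I j" using r by (auto simp: S_def)
    then obtain k h where k: "k \<in> K M" and h: "h \<in> I j" and kh: "r \<ominus> t M = k \<oplus> h"
      unfolding set_add_def' by blast
    have kc: "k \<in> carrier R" and hc: "h \<in> carrier R"
      using k h left_ideal_subset[OF K] I_subset_carrier by blast+
    have "(t M \<oplus> k) \<ominus> t M = k" using t kc by algebra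
    then have "(t M \<oplus> k) \<ominus> t M \<in> K M <+>\<^bsub>R\<^esub> I (Suc j)"
      using k left_ideal_set_add_upper(1)[OF K left_ideal_I] by auto
    moreover have "N (Suc j) \<le> M" unfolding M_def by simp
    ultimately have S_Suc: "t M \<oplus> k \<in> S (Suc j)" using S_intro t kc by blast
    have "r = (r \<ominus> t M) \<oplus> t M" using rc t by algebra
    also have "\<dots> = k \<oplus> h \<oplus> t M" using kh by simp
    finally have r_eq: "r = k \<oplus> h \<oplus> t M" .
    have "(t M \<oplus> k) \<ominus> (k \<oplus> h \<oplus> t M) = \<ominus> h" using t kc hc by algebra
    then have "(t M \<oplus> k) \<ominus> r = \<ominus> h" unfolding r_eq .
    then have "(t M \<oplus> k) \<ominus> r \<in> I j" using h left_ideal_a_inv[OF left_ideal_I] by simp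
    with S_Suc show ?thesis by blast
  qed
  obtain \<rho> where \<rho>: "\<forall>j. \<rho> j \<in> S j \<and> \<rho> (Suc j) \<ominus> \<rho> j \<in> I j"
    using dependent_nat_choice[of "\<lambda>j r. r \<in> S j" "\<lambda>j r r'. r' \<ominus> r \<in> I j"] S_start S_step
    by blast
  have "K j <+>\<^bsub>R\<^esub> I j \<subseteq> K j" for j
    using I_K left_ideal_add[OF K] unfolding set_add_def' by blast
  then show ?thesis using \<rho> unfolding S_def by blast
qed

lemma compatible_solution_sequence:
  assumes L: "\<And>m. left_ideal R (L m)" and I_L: "\<And>m. I m \<subseteq> L m"
    and L_antimono: "\<And>j m. j \<le> m \<Longrightarrow> L m \<subseteq> L j"
    and \<alpha>: "\<And>m. \<alpha> m \<in> carrier R" and \<alpha>_compat: "\<And>j m. j \<le> m \<Longrightarrow> \<alpha> m \<ominus> \<alpha> j \<in> I j"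
    and \<psi>: "\<And>m. \<psi> m \<in> carrier R" and \<psi>_compat: "\<And>j m. j \<le> m \<Longrightarrow> \<psi> m \<ominus> \<psi> j \<in> I j"
    and solvable: "\<And>m. \<exists>t\<in>carrier R. \<psi> m \<ominus> t \<otimes> \<alpha> m \<in> L m"
  shows "\<exists>\<rho>. \<forall>j. (\<rho> j \<in> carrier R \<and> \<psi> j \<ominus> \<rho> j \<otimes> \<alpha> j \<in> L j) \<and> \<rho> (Suc j) \<ominus> \<rho> j \<in> I j"
proof -
  obtain t where t: "\<And>m. t m \<in> carrier R" "\<And>m. \<psi> m \<ominus> t m \<otimes> \<alpha> m \<in> L m"
    using solvable by metis
  define K where "K m = {r \<in> carrier R. r \<otimes> \<alpha> m \<in> L m}" for m
  have K: "left_ideal R (K m)" for m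
    unfolding K_def using left_ideal_mult_preimage[OF L \<alpha>] .
  have I_K: "I m \<subseteq> K m" for m
    unfolding K_def using ideal_subset_mult_preimage[OF ideal_I I_L \<alpha>] .
  have K_Suc: "K (Suc m) \<subseteq> K m" for m
    unfolding K_def using L_antimono[of m "Suc m"] \<alpha>_compat[of m "Suc m"] I_L
    by (intro mult_preimage_antimono[OF L _ \<alpha> \<alpha>]) auto
  have t_compat: "t m \<ominus> t j \<in> K j" if "j \<le> m" for j m
  proof -
    have "(t m \<ominus> t j) \<otimes> \<alpha> j = (\<psi> j \<ominus> t j \<otimes> \<alpha> j) \<ominus> (\<psi> m \<ominus> t m \<otimes> \<alpha> m)
        \<oplus> ((\<psi> m \<ominus> \<psi> j) \<ominus> t m \<otimes> (\<alpha> m \<ominus> \<alpha> j))"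
      using t \<alpha> \<psi> by algebra
    moreover have "\<psi> m \<ominus> t m \<otimes> \<alpha> m \<in> L j" using t(2) L_antimono[OF that] by blast
    moreover have "\<psi> m \<ominus> \<psi> j \<in> L j" "t m \<otimes> (\<alpha> m \<ominus> \<alpha> j) \<in> L j"
      using \<psi>_compat[OF that] left_ideal_mult[OF left_ideal_I t(1) \<alpha>_compat[OF that]] I_L by blast+
    ultimately have "(t m \<ominus> t j) \<otimes> \<alpha> j \<in> L j"
      using t(2)[of j] left_ideal_add[OF L] left_ideal_minus[OF L] by simp
    then show ?thesis unfolding K_def using t by simp
  qed
  obtain \<rho> where \<rho>: "\<And>j. \<rho> j \<in> carrier R" "\<And>j. \<rho> j \<ominus> t j \<in> K j" "\<And>j. \<rho> (Suc j) \<ominus> \<rho> j \<in> I j"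
    using compatible_coset_sequence[OF K I_K K_Suc t(1) t_compat] by blast
  have "\<psi> j \<ominus> \<rho> j \<otimes> \<alpha> j \<in> L j" for j
  proof -
    have "\<psi> j \<ominus> \<rho> j \<otimes> \<alpha> j = (\<psi> j \<ominus> t j \<otimes> \<alpha> j) \<ominus> (\<rho> j \<ominus> t j) \<otimes> \<alpha> j"
      using \<rho>(1) t(1) \<alpha> \<psi> by algebra
    moreover have "(\<rho> j \<ominus> t j) \<otimes> \<alpha> j \<in> L j" using \<rho>(2) unfolding K_def by blast
    ultimately show ?thesis using t(2) left_ideal_minus[OF L] by simp
  qed
  then show ?thesis using \<rho> by blast
qed

lemma completion_remove_generator:
  assumes a: "a \<in> carrier Rbar" and as: "set as \<subseteq> carrier Rbar" and y: "y \<in> carrier Rbar"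
    and y_level: "\<And>j. y j \<subseteq> level_span (a # as) j"
  obtains r where "r \<in> carrier Rbar" "\<And>j. (y \<ominus>\<^bsub>Rbar\<^esub> r \<otimes>\<^bsub>Rbar\<^esub> a) j \<subseteq> level_span as j"
proof -
  define \<alpha> where "\<alpha> m = coset_rep (a m)" for m
  define \<psi> where "\<psi> m = coset_rep (y m)" for m
  have \<alpha>: "\<alpha> m \<in> carrier R" "a m = I m +> \<alpha> m" for m
    unfolding \<alpha>_def using completion_coset_rep[OF a] by simp_all
  have \<psi>: "\<psi> m \<in> carrier R" "y m = I m +> \<psi> m" for m
    unfolding \<psi>_def using completion_coset_rep[OF y] by simp_all
  note L = left_ideal_level_span[OF as] I_subset_level_span[OF as]
  have "\<exists>\<rho>. \<forall>j. (\<rho> j \<in> carrier R \<and> \<psi> j \<ominus> \<rho> j \<otimes> \<alpha> j \<in> level_span as j) \<and> \<rho> (Suc j) \<ominus> \<rho> j \<in> I j"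
  proof (rule compatible_solution_sequence[OF L level_span_antimono[OF as] \<alpha>(1) _ \<psi>(1)])
    show "\<alpha> m \<ominus> \<alpha> j \<in> I j" "\<psi> m \<ominus> \<psi> j \<in> I j" if "j \<le> m" for j m
      unfolding \<alpha>_def \<psi>_def using completion_coset_rep_compat[OF _ that] a y by blast+
    have "\<psi> m \<in> level_span (a # as) m" for m
      using y_level[of m] rcos_subset_left_ideal_iff[OF left_ideal_level_span I_subset_level_span \<psi>(1)]
        a as \<psi>(2) by simp
    then show "\<exists>t\<in>carrier R. \<psi> m \<ominus> t \<otimes> \<alpha> m \<in> level_span as m" for m
      using level_span_Cons_iff[OF a as \<psi>(1)] unfolding \<alpha>_def by blast
  qed
  then obtain \<rho> where \<rho>: "\<And>j. \<rho> j \<in> carrier R" "\<And>j. \<psi> j \<ominus> \<rho> j \<otimes> \<alpha> j \<in> level_span as j"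
    "\<And>j. \<rho> (Suc j) \<ominus> \<rho> j \<in> I j"
    by blast
  define r where "r = (\<lambda>j. I j +> \<rho> j)"
  have r: "r \<in> carrier Rbar" unfolding r_def using rcos_seq_in_completion \<rho>(1,3) by blast
  have "(y \<ominus>\<^bsub>Rbar\<^esub> r \<otimes>\<^bsub>Rbar\<^esub> a) j = I j +> (\<psi> j \<ominus> \<rho> j \<otimes> \<alpha> j)" for j
    by (rule completion_minus_mult_apply[OF y r a]) (simp_all add: \<psi> \<rho>(1) \<alpha> r_def)
  then have "(y \<ominus>\<^bsub>Rbar\<^esub> r \<otimes>\<^bsub>Rbar\<^esub> a) j \<subseteq> level_span as j" for j
    using rcos_subset_left_ideal_iff[OF L] \<rho>(2) \<psi>(1) \<rho>(1) \<alpha>(1) by simp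
  with r show ?thesis using that by blast
qed

lemma levelwise_in_left_span_completion:
  assumes "set as \<subseteq> carrier Rbar" "y \<in> carrier Rbar" "\<And>j. y j \<subseteq> level_span as j"
  shows "y \<in> left_span Rbar {\<zero>\<^bsub>Rbar\<^esub>} as"
  using assms
proof (induction as arbitrary: y)
  case Nil
  have "y j = I j" for j
  proof -
    interpret ideal "I j" R by (rule ideal_I)
    obtain c where c: "c \<in> carrier R" "y j = I j +> c" using completion_apply_rcos[OF Nil.prems(2)] .
    then have "c \<in> I j" using Nil.prems(3)[of j] rcos_subset_left_ideal_iff[OF left_ideal_I order_refl]
      by (simp add: level_span_def)
    then show ?thesis using c(2) a_rcos_const by simp
  qed
  then have "y = \<zero>\<^bsub>Rbar\<^esub>" by (auto simp: completion_simps FactRing_def)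
  then show ?case by simp
next
  case (Cons a as)
  have a: "a \<in> carrier Rbar" and as: "set as \<subseteq> carrier Rbar" using Cons.prems by auto
  obtain r where r: "r \<in> carrier Rbar" and rest: "\<And>j. (y \<ominus>\<^bsub>Rbar\<^esub> r \<otimes>\<^bsub>Rbar\<^esub> a) j \<subseteq> level_span as j"
    using completion_remove_generator[OF a as Cons.prems(2,3)] by blast
  have "y \<ominus>\<^bsub>Rbar\<^esub> r \<otimes>\<^bsub>Rbar\<^esub> a \<in> left_span Rbar {\<zero>\<^bsub>Rbar\<^esub>} as"
    using Cons.IH[OF as _ rest] r a Cons.prems(2) by simp
  moreover have "y = r \<otimes>\<^bsub>Rbar\<^esub> a \<oplus>\<^bsub>Rbar\<^esub> (y \<ominus>\<^bsub>Rbar\<^esub> r \<otimes>\<^bsub>Rbar\<^esub> a)"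
    using r a Cons.prems(2) by algebra
  ultimately show ?case using r by auto
qed

lemma left_span_completion_eq_levelwise:
  assumes "set as \<subseteq> carrier Rbar"
  shows "left_span Rbar {\<zero>\<^bsub>Rbar\<^esub>} as = {y \<in> completion_carrier R I. \<forall>j. y j \<subseteq> level_span as j}"
proof
  show "left_span Rbar {\<zero>\<^bsub>Rbar\<^esub>} as \<subseteq> {y \<in> completion_carrier R I. \<forall>j. y j \<subseteq> level_span as j}"
    using left_span_completion_levelwise[OF assms]
      completion.left_ideal_subset[OF completion.left_ideal_left_span[OF completion.left_ideal_zero_ideal assms]]
    by (auto simp: completion_simps)
  show "{y \<in> completion_carrier R I. \<forall>j. y j \<subseteq> level_span as j} \<subseteq> left_span Rbar {\<zero>\<^bsub>Rbar\<^esub>} as"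
    using levelwise_in_left_span_completion[OF assms] by (auto simp: completion_simps)
qed

lemma closedin_left_genideal:
  assumes "finite A" "A \<subseteq> carrier Rbar"
  shows "closedin (completion_topology R I) (left_genideal Rbar A)"
proof -
  obtain as where as: "set as = A" using finite_list[OF assms(1)] by blast
  then have "left_genideal Rbar A = {y \<in> completion_carrier R I. \<forall>j. y j \<subseteq> level_span as j}"
    using completion.left_genideal_eq_left_span left_span_completion_eq_levelwise assms(2) by auto
  then show ?thesis using closedin_completion_topology_levelwise by simp
qed

end

theorem lemma4p2:
  fixes F :: "('f, 'g) ring_scheme"
    and R :: "('f, 'a, 'b) module_scheme"
    and I :: "nat \<Rightarrow> 'a set"
  assumes "cring F"
    and "F_algebra F R"
    and "descending_filtration R I"
    and "\<And>s. artinian_ring (R Quot I s)"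
  shows "\<forall>A. finite A \<and> A \<subseteq> carrier (completion R I) \<longrightarrow>
            closedin (completion_topology R I) (left_genideal (completion R I) A) \<and>
            closedin (completion_topology R I) (right_genideal (completion R I) A)"
proof (intro allI impI conjI)
  have R: "ring R" using assms(2) unfolding F_algebra_def by blast
  have I: "ideal (I j) R" "I (Suc j) \<subseteq> I j" for j
    using assms(3) unfolding descending_filtration_def by auto
  have artinian: "left_artinian (R Quot I j)" "right_artinian (R Quot I j)" for j
    using assms(4) unfolding artinian_ring_def by auto
  interpret left: filtered_left_artinian_ring R I
    by (intro filtered_left_artinian_ring.intro filtered_ring.intro filtered_ring_axioms.intro
        filtered_left_artinian_ring_axioms.intro R I artinian)
  interpret right: filtered_left_artinian_ring "opposite_ring R" I
    by (intro filtered_left_artinian_ring.intro filtered_ring.intro filtered_ring_axioms.intro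
        filtered_left_artinian_ring_axioms.intro ring_opposite_ring ideal_opposite_ring R I)
      (simp add: opposite_ring_Quot left_artinian_opposite_ring artinian)
  fix A assume A: "finite A \<and> A \<subseteq> carrier (completion R I)"
  then show "closedin (completion_topology R I) (left_genideal (completion R I) A)"
    using left.closedin_left_genideal by blast
  have "closedin (completion_topology (opposite_ring R) I) (left_genideal (completion (opposite_ring R) I) A)"
    using A right.closedin_left_genideal by (simp add: completion_opposite_ring)
  then show "closedin (completion_topology R I) (right_genideal (completion R I) A)"
    by (simp add: completion_topology_opposite_ring completion_opposite_ring left_genideal_opposite_ring)
qed

end
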